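(* Let $L$ be a co-Heyting algebra and $X\subseteq L$ a subset which is compact for the codimetric topology. Then every monotonic (increasing or decreasing) sequence of elements of $X$ is convergent for the codimetric pseudometric.
   Context: A co-Heyting algebra is a bounded distributive lattice $(L,0,1,\vee,\wedge)$ such that $a-b=\min\{c\in L: a\le b\vee c\}$ exists for all $a,b$. Let $a\triangle b=(a-b)\vee(b-a)$. $\operatorname{Spec}L$ is the set of prime filters ordered by inclusion; height = foundation rank there; $\operatorname{codim}_La=\min\{\operatorname{height}\mathfrak p: a\in\mathfrak p\}$ ($+\infty$ if none). The codimetric pseudometric is $\operatorname{dist}_L(a,b)=2^{-\operatorname{codim}_L(a\triangle b)}$ if finite and $0$ otherwise; the codimetric topology is the topology it defines. *)

theory Defs
  imports "HOL-Analysis.Analysis"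
begin

definition coheyting :: "'a::{distrib_lattice,bounded_lattice} itself \<Rightarrow> bool" where
  "coheyting _ \<longleftrightarrow> (\<forall>a b::'a. \<exists>c. a \<le> sup b c \<and> (\<forall>d. a \<le> sup b d \<longrightarrow> c \<le> d))"

definition cdiff :: "'a::{distrib_lattice,bounded_lattice} \<Rightarrow> 'a \<Rightarrow> 'a" where
  "cdiff a b = (LEAST c. a \<le> sup b c)"

definition symdiff :: "'a::{distrib_lattice,bounded_lattice} \<Rightarrow> 'a \<Rightarrow> 'a" where
  "symdiff a b = sup (cdiff a b) (cdiff b a)"

definition prime_filter :: "'a::{distrib_lattice,bounded_lattice} set \<Rightarrow> bool" where
  "prime_filter F \<longleftrightarrow> top \<in> F \<and> bot \<notin> F
     \<and> (\<forall>a b. a \<in> F \<longrightarrow> a \<le> b \<longrightarrow> b \<in> F)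
     \<and> (\<forall>a b. a \<in> F \<longrightarrow> b \<in> F \<longrightarrow> inf a b \<in> F)
     \<and> (\<forall>a b. sup a b \<in> F \<longrightarrow> a \<in> F \<or> b \<in> F)"

text \<open>height_le p n: the foundation rank (height) of p in Spec L
  (prime filters ordered by inclusion) is at most the natural number n.
  Rank p = sup {rank q + 1 | q \<subset> p}, so rank p \<le> n iff every prime
  filter q \<subset> p has rank \<le> n - 1 (and none exists when n = 0).\<close>
fun height_le :: "'a::{distrib_lattice,bounded_lattice} set \<Rightarrow> nat \<Rightarrow> bool" where
  "height_le p 0 \<longleftrightarrow> (\<forall>q. prime_filter q \<longrightarrow> \<not> q \<subset> p)"
| "height_le p (Suc n) \<longleftrightarrow> (\<forall>q. prime_filter q \<longrightarrow> q \<subset> p \<longrightarrow> height_le q n)"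

definition codim_finite :: "'a::{distrib_lattice,bounded_lattice} \<Rightarrow> bool" where
  "codim_finite a \<longleftrightarrow> (\<exists>n p. prime_filter p \<and> a \<in> p \<and> height_le p n)"

definition codim :: "'a::{distrib_lattice,bounded_lattice} \<Rightarrow> nat" where
  "codim a = (LEAST n. \<exists>p. prime_filter p \<and> a \<in> p \<and> height_le p n)"

definition codist :: "'a::{distrib_lattice,bounded_lattice} \<Rightarrow> 'a \<Rightarrow> real" where
  "codist a b = (if codim_finite (symdiff a b) then 2 powr (- real (codim (symdiff a b))) else 0)"

definition codim_topology :: "'a::{distrib_lattice,bounded_lattice} topology" where
  "codim_topology = topology (\<lambda>U. \<forall>x\<in>U. \<exists>e>0. \<forall>y. codist x y < e \<longrightarrow> y \<in> U)"

definition codist_convergent :: "(nat \<Rightarrow> 'a::{distrib_lattice,bounded_lattice}) \<Rightarrow> bool" where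
  "codist_convergent s \<longleftrightarrow> (\<exists>l. \<forall>e>0. \<exists>N. \<forall>n\<ge>N. codist (s n) l < e)"

end

theory Submission
  imports Defs
begin

text \<open>The co-Heyting difference is left adjoint to the join, which gives the triangle law
  \<open>a \<triangle> c \<le> (a \<triangle> b) \<squnion> (b \<triangle> c)\<close>. Since \<open>2 ^ (- codim)\<close> is monotone and, by primality of
  filters, turns joins into maxima, the codimetric distance is an ultrametric; in particular
  its balls are open. A compact set therefore contains a cluster point \<open>l\<close> of any sequence in it.
  For a monotone sequence the distance \<open>codist (s n) (s N)\<close> grows with \<open>n\<close>, so once some later
  term is close to \<open>l\<close>, the ultrametric inequality forces all intermediate terms to be close
  to \<open>l\<close> as well.\<close>

lemma cdiff_le_iff:
  fixes a b d :: "'a::{distrib_lattice,bounded_lattice}"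
  assumes "coheyting TYPE('a)"
  shows "cdiff a b \<le> d \<longleftrightarrow> a \<le> sup b d"
proof -
  obtain c where c: "a \<le> sup b c" "\<And>d. a \<le> sup b d \<Longrightarrow> c \<le> d"
    using assms unfolding coheyting_def by blast
  have "cdiff a b = c"
    unfolding cdiff_def by (rule Least_equality) (use c in auto)
  show ?thesis
  proof
    assume "cdiff a b \<le> d"
    then have "sup b c \<le> sup b d"
      using \<open>cdiff a b = c\<close> by (simp add: le_supI2)
    then show "a \<le> sup b d"
      using c(1) by (rule order_trans[rotated])
  qed (use c \<open>cdiff a b = c\<close> in simp)
qed

lemma le_sup_cdiff:
  fixes a b :: "'a::{distrib_lattice,bounded_lattice}"
  assumes "coheyting TYPE('a)"
  shows "a \<le> sup b (cdiff a b)"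
  using cdiff_le_iff[OF assms] by blast

lemma cdiff_eq_bot:
  fixes a b :: "'a::{distrib_lattice,bounded_lattice}"
  assumes "a \<le> b"
  shows "cdiff a b = bot"
  unfolding cdiff_def by (rule Least_equality) (simp_all add: assms)

lemma cdiff_mono:
  fixes a a' b b' :: "'a::{distrib_lattice,bounded_lattice}"
  assumes "coheyting TYPE('a)" "a \<le> a'" "b' \<le> b"
  shows "cdiff a b \<le> cdiff a' b'"
  unfolding cdiff_le_iff[OF assms(1)]
proof -
  have "a' \<le> sup b' (cdiff a' b')" by (rule le_sup_cdiff[OF assms(1)])
  also have "\<dots> \<le> sup b (cdiff a' b')" using assms(3) by (rule sup_mono) simp
  finally show "a \<le> sup b (cdiff a' b')" using assms(2) by (rule order_trans[rotated])
qed

lemma cdiff_trans: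
  fixes a b c :: "'a::{distrib_lattice,bounded_lattice}"
  assumes "coheyting TYPE('a)"
  shows "cdiff a c \<le> sup (cdiff a b) (cdiff b c)"
  unfolding cdiff_le_iff[OF assms]
proof -
  have "a \<le> sup b (cdiff a b)" by (rule le_sup_cdiff[OF assms])
  also have "\<dots> \<le> sup (sup c (cdiff b c)) (cdiff a b)"
    using le_sup_cdiff[OF assms, of b c] by (simp add: le_supI1)
  also have "\<dots> = sup c (sup (cdiff a b) (cdiff b c))"
    by (simp add: ac_simps)
  finally show "a \<le> sup c (sup (cdiff a b) (cdiff b c))" .
qed

lemma symdiff_commute: "symdiff a b = symdiff b a"
  unfolding symdiff_def by (simp add: sup_commute)

lemma symdiff_trans:
  fixes a b c :: "'a::{distrib_lattice,bounded_lattice}"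
  assumes "coheyting TYPE('a)"
  shows "symdiff a c \<le> sup (symdiff a b) (symdiff b c)"
proof -
  have "cdiff a c \<le> sup (symdiff a b) (symdiff b c)"
    using cdiff_trans[OF assms, where a=a and b=b and c=c] unfolding symdiff_def
    by (rule order_trans) (intro sup_mono sup_ge1)
  moreover have "cdiff c a \<le> sup (symdiff a b) (symdiff b c)"
    using cdiff_trans[OF assms, where a=c and b=b and c=a] unfolding symdiff_def
    by (rule order_trans) (simp add: le_supI1 le_supI2)
  ultimately show ?thesis
    unfolding symdiff_def[of a c] by (rule le_supI)
qed

definition codim_weight :: "'a::{distrib_lattice,bounded_lattice} \<Rightarrow> real" where
  "codim_weight a = (if codim_finite a then 2 powr (- real (codim a)) else 0)"

lemma codist_eq_codim_weight: "codist a b = codim_weight (symdiff a b)"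
  unfolding codist_def codim_weight_def by simp

lemma codim_weight_nonneg: "codim_weight a \<ge> 0"
  unfolding codim_weight_def by auto

lemma codim_witness:
  assumes "codim_finite a"
  obtains p where "prime_filter p" "a \<in> p" "height_le p (codim a)"
  using LeastI_ex[of "\<lambda>n. \<exists>p. prime_filter p \<and> a \<in> p \<and> height_le p n"] assms
  unfolding codim_finite_def codim_def by blast

lemma codim_weight_ge_if_mem_prime_filter:
  assumes "prime_filter p" "b \<in> p" "height_le p (codim a)" "codim_finite a"
  shows "codim_weight a \<le> codim_weight b"
proof -
  have "codim_finite b" "codim b \<le> codim a"
    using assms unfolding codim_finite_def codim_def[of b] by (blast intro: Least_le)+
  then show ?thesis
    using assms(4) unfolding codim_weight_def by simp
qed

lemma codim_weight_mono:
  assumes "a \<le> b"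
  shows "codim_weight a \<le> codim_weight b"
proof (cases "codim_finite a")
  case True
  then obtain p where p: "prime_filter p" "a \<in> p" "height_le p (codim a)"
    by (rule codim_witness)
  then have "b \<in> p"
    using assms unfolding prime_filter_def by blast
  then show ?thesis
    by (rule codim_weight_ge_if_mem_prime_filter[OF p(1) _ p(3) True])
next
  case False
  then show ?thesis
    using codim_weight_nonneg[of b] unfolding codim_weight_def by simp
qed

lemma codim_weight_sup: "codim_weight (sup a b) \<le> max (codim_weight a) (codim_weight b)"
proof (cases "codim_finite (sup a b)")
  case True
  then obtain p where p: "prime_filter p" "sup a b \<in> p" "height_le p (codim (sup a b))"
    by (rule codim_witness)
  then have "a \<in> p \<or> b \<in> p"
    unfolding prime_filter_def by blast
  then show ?thesis
    using codim_weight_ge_if_mem_prime_filter[OF p(1) _ p(3) True] by force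
next
  case False
  then show ?thesis
    using codim_weight_nonneg[of a] unfolding codim_weight_def by simp
qed

lemma codist_nonneg: "codist a b \<ge> 0"
  by (simp add: codist_eq_codim_weight codim_weight_nonneg)

lemma codist_commute: "codist a b = codist b a"
  by (simp add: codist_eq_codim_weight symdiff_commute)

lemma codist_self: "codist a a = 0"
proof -
  have "\<not> codim_finite (symdiff a a)"
    unfolding codim_finite_def symdiff_def cdiff_eq_bot[OF order_refl] prime_filter_def
    by simp
  then show ?thesis
    unfolding codist_def by simp
qed

lemma codist_ultrametric:
  fixes a b c :: "'a::{distrib_lattice,bounded_lattice}"
  assumes "coheyting TYPE('a)"
  shows "codist a c \<le> max (codist a b) (codist b c)"
  unfolding codist_eq_codim_weight
  using codim_weight_mono[OF symdiff_trans[OF assms, where a=a and b=b and c=c]]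
    codim_weight_sup[of "symdiff a b" "symdiff b c"]
  by linarith

lemma codist_mono_above:
  fixes x x' y :: "'a::{distrib_lattice,bounded_lattice}"
  assumes "coheyting TYPE('a)" "y \<le> x" "x \<le> x'"
  shows "codist x y \<le> codist x' y"
proof -
  have "symdiff x y \<le> symdiff x' y"
    using cdiff_mono[OF assms(1) assms(3) order_refl, of y]
    unfolding symdiff_def cdiff_eq_bot[OF assms(2)] by (simp add: le_supI1)
  then show ?thesis
    unfolding codist_eq_codim_weight by (rule codim_weight_mono)
qed

lemma codist_mono_below:
  fixes x x' y :: "'a::{distrib_lattice,bounded_lattice}"
  assumes "coheyting TYPE('a)" "x \<le> y" "x' \<le> x"
  shows "codist x y \<le> codist x' y"
proof -
  have "symdiff x y \<le> symdiff x' y"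
    using cdiff_mono[OF assms(1) order_refl assms(3), of y]
    unfolding symdiff_def cdiff_eq_bot[OF assms(2)] by (simp add: le_supI2)
  then show ?thesis
    unfolding codist_eq_codim_weight by (rule codim_weight_mono)
qed

lemma codist_monotone_seq:
  fixes s :: "nat \<Rightarrow> 'a::{distrib_lattice,bounded_lattice}"
  assumes "coheyting TYPE('a)" "mono s \<or> antimono s" "N \<le> n" "n \<le> n'"
  shows "codist (s n) (s N) \<le> codist (s n') (s N)"
  using assms(2)
proof
  assume "mono s"
  then show ?thesis
    using assms(3,4) by (intro codist_mono_above[OF assms(1)]) (auto dest: monoD)
next
  assume "antimono s"
  then show ?thesis
    using assms(3,4) by (intro codist_mono_below[OF assms(1)]) (auto dest: antimonoD)
qed

lemma openin_codim_topology:
  "openin codim_topology U \<longleftrightarrow> (\<forall>x\<in>U. \<exists>e>0. \<forall>y. codist x y < e \<longrightarrow> y \<in> U)"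
proof -
  have "istopology (\<lambda>U. \<forall>x\<in>U. \<exists>e>0. \<forall>y. codist x y < e \<longrightarrow> y \<in> (U :: 'a set))"
    unfolding istopology_def
  proof (intro conjI allI impI ballI)
    fix S T :: "'a set" and x
    assume "\<forall>x\<in>S. \<exists>e>0. \<forall>y. codist x y < e \<longrightarrow> y \<in> S"
      and "\<forall>x\<in>T. \<exists>e>0. \<forall>y. codist x y < e \<longrightarrow> y \<in> T" and "x \<in> S \<inter> T"
    then obtain e1 e2 where "e1 > 0" "\<forall>y. codist x y < e1 \<longrightarrow> y \<in> S"
      and "e2 > 0" "\<forall>y. codist x y < e2 \<longrightarrow> y \<in> T"
      by blast
    then show "\<exists>e>0. \<forall>y. codist x y < e \<longrightarrow> y \<in> S \<inter> T"
      by (intro exI[of _ "min e1 e2"]) auto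
  next
    fix K :: "'a set set" and x
    assume "\<forall>S\<in>K. \<forall>x\<in>S. \<exists>e>0. \<forall>y. codist x y < e \<longrightarrow> y \<in> S" and "x \<in> \<Union>K"
    then show "\<exists>e>0. \<forall>y. codist x y < e \<longrightarrow> y \<in> \<Union>K"
      by (meson UnionE UnionI)
  qed
  then show ?thesis
    unfolding codim_topology_def by (simp only: topology_inverse')
qed

lemma openin_codist_ball:
  fixes l :: "'a::{distrib_lattice,bounded_lattice}"
  assumes "coheyting TYPE('a)"
  shows "openin codim_topology {y. codist l y < e}"
  unfolding openin_codim_topology
proof (intro ballI exI conjI allI impI)
  fix x assume x: "x \<in> {y. codist l y < e}"
  then show "e - codist l x > 0" by simp
  fix y assume "codist x y < e - codist l x"
  then show "y \<in> {y. codist l y < e}"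
    using x codist_ultrametric[OF assms, where a=l and b=x and c=y] codist_nonneg[of l x]
    by (simp add: max_def split: if_split_asm)
qed

lemma compactin_imp_cluster_point:
  fixes d :: "'a \<Rightarrow> 'a \<Rightarrow> real" and s :: "nat \<Rightarrow> 'a"
  assumes "compactin T X" "\<forall>n. s n \<in> X"
    and balls_open: "\<And>l e. openin T {y. d l y < e}"
    and self: "\<And>l. d l l = 0"
  shows "\<exists>l\<in>X. \<forall>e>0. \<forall>N. \<exists>n\<ge>N. d l (s n) < e"
proof (rule ccontr)
  assume "\<not> ?thesis"
  then have "\<forall>l\<in>X. \<exists>e. e > 0 \<and> eventually (\<lambda>n. e \<le> d l (s n)) sequentially"
    unfolding eventually_sequentially by (simp add: not_less)
  then obtain E where E: "\<forall>l\<in>X. E l > 0 \<and> eventually (\<lambda>n. E l \<le> d l (s n)) sequentially"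
    by (rule bchoice[THEN exE])
  have cover: "X \<subseteq> \<Union> ((\<lambda>l. {y. d l y < E l}) ` X)"
  proof
    fix x assume "x \<in> X"
    then have "x \<in> {y. d x y < E x}"
      using E self by simp
    then show "x \<in> \<Union> ((\<lambda>l. {y. d l y < E l}) ` X)"
      using \<open>x \<in> X\<close> by blast
  qed
  have "\<exists>\<F>. finite \<F> \<and> \<F> \<subseteq> (\<lambda>l. {y. d l y < E l}) ` X \<and> X \<subseteq> \<Union>\<F>"
    by (rule compactinD[OF assms(1) _ cover]) (auto intro: balls_open)
  then obtain G where G: "finite G" "G \<subseteq> X" "X \<subseteq> (\<Union>l\<in>G. {y. d l y < E l})"
    using finite_subset_image by (metis (no_types, lifting))
  have "eventually (\<lambda>n. \<forall>l\<in>G. E l \<le> d l (s n)) sequentially"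
    using G(1) by (rule eventually_ball_finite) (use G(2) E in blast)
  then obtain n where n: "\<forall>l\<in>G. E l \<le> d l (s n)"
    unfolding eventually_sequentially by blast
  obtain l where "l \<in> G" "d l (s n) < E l"
    using G(3) assms(2) by blast
  with n show False
    by fastforce
qed

lemma codist_convergent_if_monotone_cluster_point:
  fixes s :: "nat \<Rightarrow> 'a::{distrib_lattice,bounded_lattice}"
  assumes coh: "coheyting TYPE('a)" and mono: "mono s \<or> antimono s"
    and cluster: "\<forall>e>0. \<forall>N. \<exists>n\<ge>N. codist l (s n) < e"
  shows "codist_convergent s"
  unfolding codist_convergent_def
proof (intro exI[of _ l] allI impI)
  fix e :: real assume "e > 0"
  then obtain N where N: "codist l (s N) < e"
    using cluster by blast
  show "\<exists>N. \<forall>n\<ge>N. codist (s n) l < e"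
  proof (intro exI[of _ N] allI impI)
    fix n assume "N \<le> n"
    obtain n' where "n \<le> n'" "codist l (s n') < e"
      using cluster \<open>e > 0\<close> by blast
    have "codist (s n) (s N) \<le> codist (s n') (s N)"
      using codist_monotone_seq[OF coh mono \<open>N \<le> n\<close> \<open>n \<le> n'\<close>] .
    also have "\<dots> \<le> max (codist (s n') l) (codist l (s N))"
      by (rule codist_ultrametric[OF coh])
    also have "\<dots> < e"
      using N \<open>codist l (s n') < e\<close> by (simp add: codist_commute)
    finally have "codist (s n) (s N) < e" .
    moreover have "codist (s n) l \<le> max (codist (s n) (s N)) (codist (s N) l)"
      by (rule codist_ultrametric[OF coh])
    ultimately show "codist (s n) l < e"
      using N by (simp add: codist_commute)
  qed
qed

theorem corollary7p7:
  fixes X :: "'a::{distrib_lattice,bounded_lattice} set"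
    and s :: "nat \<Rightarrow> 'a"
  assumes "coheyting TYPE('a)"
    and "compactin codim_topology X"
    and "\<forall>n. s n \<in> X"
    and "mono s \<or> antimono s"
  shows "codist_convergent s"
proof -
  obtain l where "\<forall>e>0. \<forall>N. \<exists>n\<ge>N. codist l (s n) < e"
    using compactin_imp_cluster_point[OF assms(2,3) openin_codist_ball[OF assms(1)] codist_self]
    by blast
  then show ?thesis
    using codist_convergent_if_monotone_cluster_point[OF assms(1,4)] by blast
qed

end
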